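(* Let $\Gamma=(V,E)$ be a directed graph and $A(\Gamma)$ its associated algebra. (a) If $e_1,e_2$ are distinct edges with a common tail and $f_1,f_2$ are edges with a common head with $h(e_i)=t(f_i)$ ($i=1,2$), i.e. the pair $f_1,f_2$ is obtained from $e_1,e_2$ by the D-operation, then each of the elements $f_1,f_2\in A(\Gamma)$ is obtained by the $d$-operation from one of the ordered pairs $(e_1,e_2)$, $(e_2,e_1)$. (b) If $h_1,h_2$ are distinct edges with a common head and $g_1,g_2$ are edges with a common tail with $h(g_i)=t(h_i)$ ($i=1,2$), i.e. the pair $g_1,g_2$ is obtained from $h_1,h_2$ by the U-operation, then each of the elements $g_1,g_2\in A(\Gamma)$ is obtained by the $u$-operation from one of the ordered pairs $(h_1,h_2)$, $(h_2,h_1)$.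
   Context: Each edge $e$ has tail $t(e)$ and head $h(e)$; a directed path is $e_1,\dots,e_k$ with $t(e_{i+1})=h(e_i)$. For a field $k$, $A(\Gamma)$ is the quotient of the free associative $k$-algebra on $E$ by the relations that for any two directed paths $(e_1,\dots,e_k)$, $(e'_1,\dots,e'_l)$ with the same origin and terminus, $(t-e_1)\cdots(t-e_k)=(t-e'_1)\cdots(t-e'_l)$ coefficientwise ($t$ central). For elements $a,b,\eta,\xi\in A(\Gamma)$: $\eta$ is obtained from the ordered pair $(a,b)$ by the $d$-operation if $(a-b)\eta=a(a-b)$, and $\xi$ is obtained from $(a,b)$ by the $u$-operation if $(a-b)a=\xi(a-b)$. *)

theory Defs
  imports Main
begin

text \<open>Free associative algebra over a field 'k on generators 'e:
  elements are coefficient functions on words (lists of generators);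
  genuine elements are the finitely supported ones.\<close>

type_synonym ('e, 'k) fa = "'e list \<Rightarrow> 'k"

definition fa_fin :: "('e, 'k::field) fa \<Rightarrow> bool" where
  "fa_fin p \<longleftrightarrow> finite {w. p w \<noteq> 0}"

definition fa_zero :: "('e, 'k::field) fa" where
  "fa_zero = (\<lambda>w. 0)"

definition fa_one :: "('e, 'k::field) fa" where
  "fa_one = (\<lambda>w. if w = [] then 1 else 0)"

definition fa_gen :: "'e \<Rightarrow> ('e, 'k::field) fa" where
  "fa_gen e = (\<lambda>w. if w = [e] then 1 else 0)"

definition fa_add :: "('e, 'k::field) fa \<Rightarrow> ('e, 'k) fa \<Rightarrow> ('e, 'k) fa" where
  "fa_add p q = (\<lambda>w. p w + q w)"

definition fa_sub :: "('e, 'k::field) fa \<Rightarrow> ('e, 'k) fa \<Rightarrow> ('e, 'k) fa" where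
  "fa_sub p q = (\<lambda>w. p w - q w)"

definition fa_smult :: "'k::field \<Rightarrow> ('e, 'k) fa \<Rightarrow> ('e, 'k) fa" where
  "fa_smult c p = (\<lambda>w. c * p w)"

definition fa_mul :: "('e, 'k::field) fa \<Rightarrow> ('e, 'k) fa \<Rightarrow> ('e, 'k) fa" where
  "fa_mul p q = (\<lambda>w. \<Sum>i\<le>length w. p (take i w) * q (drop i w))"

inductive_set fa_ideal :: "('e, 'k::field) fa set \<Rightarrow> ('e, 'k) fa set" for S where
  gen: "s \<in> S \<Longrightarrow> s \<in> fa_ideal S"
| zero: "fa_zero \<in> fa_ideal S"
| add: "x \<in> fa_ideal S \<Longrightarrow> y \<in> fa_ideal S \<Longrightarrow> fa_add x y \<in> fa_ideal S"
| smult: "x \<in> fa_ideal S \<Longrightarrow> fa_smult c x \<in> fa_ideal S"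
| lmul: "fa_fin a \<Longrightarrow> x \<in> fa_ideal S \<Longrightarrow> fa_mul a x \<in> fa_ideal S"
| rmul: "fa_fin a \<Longrightarrow> x \<in> fa_ideal S \<Longrightarrow> fa_mul x a \<in> fa_ideal S"

text \<open>Directed graph given by tail map src and head map tgt on the edge type 'e.
  A directed path is a nonempty list of edges e_1..e_k with t(e_(i+1)) = h(e_i).\<close>

definition is_path :: "('e \<Rightarrow> 'v) \<Rightarrow> ('e \<Rightarrow> 'v) \<Rightarrow> 'e list \<Rightarrow> bool" where
  "is_path src tgt p \<longleftrightarrow> p \<noteq> [] \<and> (\<forall>i. Suc i < length p \<longrightarrow> src (p ! Suc i) = tgt (p ! i))"

definition path_origin :: "('e \<Rightarrow> 'v) \<Rightarrow> 'e list \<Rightarrow> 'v" where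
  "path_origin src p = src (hd p)"

definition path_terminus :: "('e \<Rightarrow> 'v) \<Rightarrow> 'e list \<Rightarrow> 'v" where
  "path_terminus tgt p = tgt (last p)"

text \<open>Coefficients (in the central variable t) of (t - e_1)(t - e_2)...(t - e_k):
  path_poly p n is the coefficient of t^n.\<close>
fun path_poly :: "'e list \<Rightarrow> nat \<Rightarrow> ('e, 'k::field) fa" where
  "path_poly [] n = (if n = 0 then fa_one else fa_zero)"
| "path_poly (e # es) n =
     fa_sub (if n = 0 then fa_zero else path_poly es (n - 1)) (fa_mul (fa_gen e) (path_poly es n))"

definition graph_rels :: "('e \<Rightarrow> 'v) \<Rightarrow> ('e \<Rightarrow> 'v) \<Rightarrow> ('e, 'k::field) fa set" where
  "graph_rels src tgt =
     {fa_sub (path_poly p n) (path_poly q n) | p q n.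
        is_path src tgt p \<and> is_path src tgt q \<and>
        path_origin src p = path_origin src q \<and> path_terminus tgt p = path_terminus tgt q}"

definition A_eq :: "('e \<Rightarrow> 'v) \<Rightarrow> ('e \<Rightarrow> 'v) \<Rightarrow> ('e, 'k::field) fa \<Rightarrow> ('e, 'k) fa \<Rightarrow> bool" where
  "A_eq src tgt x y \<longleftrightarrow> fa_sub x y \<in> fa_ideal (graph_rels src tgt)"

definition d_op :: "('e \<Rightarrow> 'v) \<Rightarrow> ('e \<Rightarrow> 'v) \<Rightarrow> ('e, 'k::field) fa \<Rightarrow> ('e, 'k) fa \<Rightarrow> ('e, 'k) fa \<Rightarrow> bool" where
  "d_op src tgt a b eta \<longleftrightarrow> A_eq src tgt (fa_mul (fa_sub a b) eta) (fa_mul a (fa_sub a b))"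

definition u_op :: "('e \<Rightarrow> 'v) \<Rightarrow> ('e \<Rightarrow> 'v) \<Rightarrow> ('e, 'k::field) fa \<Rightarrow> ('e, 'k) fa \<Rightarrow> ('e, 'k) fa \<Rightarrow> bool" where
  "u_op src tgt a b xi \<longleftrightarrow> A_eq src tgt (fa_mul (fa_sub a b) a) (fa_mul xi (fa_sub a b))"

end

theory Submission imports Defs begin

text \<open>The two-edge paths e1 f1 and e2 f2 have the same origin and terminus, so comparing
  the coefficients of t^0 and t^1 in (t - e1)(t - f1) = (t - e2)(t - f2) gives
  e1 f1 = e2 f2 and e1 + f1 = e2 + f2 in A(Gamma). Hence
  (e1 - e2) f2 = e1 f2 - e1 f1 = e1 (f2 - f1) = e1 (e1 - e2), i.e. f2 arises from (e1, e2)
  by the d-operation, and f1 from (e2, e1) by symmetry. The u-operation is handled in the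
  mirror-image way, multiplying the sum relation on the right.\<close>

lemma fa_mul_sub_left: "fa_mul (fa_sub p q) r = fa_sub (fa_mul p r) (fa_mul q r)"
  unfolding fa_mul_def fa_sub_def by (rule ext) (simp add: left_diff_distrib sum_subtractf)

lemma fa_mul_sub_right: "fa_mul p (fa_sub q r) = fa_sub (fa_mul p q) (fa_mul p r)"
  unfolding fa_mul_def fa_sub_def by (rule ext) (simp add: right_diff_distrib sum_subtractf)

lemma fa_mul_add_left: "fa_mul (fa_add p q) r = fa_add (fa_mul p r) (fa_mul q r)"
  unfolding fa_mul_def fa_add_def by (rule ext) (simp add: distrib_right sum.distrib)

lemma fa_mul_add_right: "fa_mul p (fa_add q r) = fa_add (fa_mul p q) (fa_mul p r)"
  unfolding fa_mul_def fa_add_def by (rule ext) (simp add: distrib_left sum.distrib)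

lemma fa_mul_zero_right: "fa_mul p fa_zero = fa_zero"
  unfolding fa_mul_def fa_zero_def by simp

lemma fa_mul_one_right: "fa_mul p fa_one = p"
proof
  fix w
  have "fa_mul p fa_one w = (\<Sum>i\<le>length w. if i = length w then p (take i w) else 0)"
    unfolding fa_mul_def fa_one_def by (rule sum.cong) auto
  then show "fa_mul p fa_one w = p w"
    by simp
qed

lemma fa_fin_gen: "fa_fin (fa_gen a :: ('e, 'k::field) fa)"
proof -
  have "{w. (fa_gen a w :: 'k) \<noteq> 0} \<subseteq> {[a]}"
    by (auto simp: fa_gen_def split: if_splits)
  then show ?thesis
    unfolding fa_fin_def by (rule finite_subset) simp
qed

lemma fa_ideal_sub: "x \<in> fa_ideal S \<Longrightarrow> y \<in> fa_ideal S \<Longrightarrow> fa_sub x y \<in> fa_ideal S"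
proof -
  assume "x \<in> fa_ideal S" "y \<in> fa_ideal S"
  then have "fa_add x (fa_smult (-1) y) \<in> fa_ideal S"
    by (intro fa_ideal.add fa_ideal.smult)
  moreover have "fa_add x (fa_smult (-1) y) = fa_sub x y"
    by (rule ext) (simp add: fa_add_def fa_smult_def fa_sub_def)
  ultimately show ?thesis
    by simp
qed

lemma d_relation_mem_fa_ideal:
  assumes "fa_fin a"
    and prod: "fa_sub (fa_mul a x) (fa_mul b y) \<in> fa_ideal S"
    and sum: "fa_sub (fa_add a x) (fa_add b y) \<in> fa_ideal S"
  shows "fa_sub (fa_mul (fa_sub a b) y) (fa_mul a (fa_sub a b)) \<in> fa_ideal S"
proof -
  have "fa_sub (fa_sub (fa_mul a x) (fa_mul b y)) (fa_mul a (fa_sub (fa_add a x) (fa_add b y)))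
      \<in> fa_ideal S"
    by (rule fa_ideal_sub[OF prod fa_ideal.lmul[OF assms(1) sum]])
  moreover have "fa_sub (fa_sub (fa_mul a x) (fa_mul b y)) (fa_mul a (fa_sub (fa_add a x) (fa_add b y)))
      = fa_sub (fa_mul (fa_sub a b) y) (fa_mul a (fa_sub a b))"
    unfolding fa_mul_sub_left fa_mul_sub_right fa_mul_add_right
    by (rule ext) (simp add: fa_sub_def fa_add_def algebra_simps)
  ultimately show ?thesis
    by simp
qed

lemma u_relation_mem_fa_ideal:
  assumes "fa_fin a"
    and prod: "fa_sub (fa_mul x a) (fa_mul y b) \<in> fa_ideal S"
    and sum: "fa_sub (fa_add x a) (fa_add y b) \<in> fa_ideal S"
  shows "fa_sub (fa_mul (fa_sub a b) a) (fa_mul y (fa_sub a b)) \<in> fa_ideal S"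
proof -
  have "fa_sub (fa_mul (fa_sub (fa_add x a) (fa_add y b)) a) (fa_sub (fa_mul x a) (fa_mul y b))
      \<in> fa_ideal S"
    by (rule fa_ideal_sub[OF fa_ideal.rmul[OF assms(1) sum] prod])
  moreover have "fa_sub (fa_mul (fa_sub (fa_add x a) (fa_add y b)) a) (fa_sub (fa_mul x a) (fa_mul y b))
      = fa_sub (fa_mul (fa_sub a b) a) (fa_mul y (fa_sub a b))"
    unfolding fa_mul_sub_left fa_mul_sub_right fa_mul_add_left
    by (rule ext) (simp add: fa_sub_def fa_add_def algebra_simps)
  ultimately show ?thesis
    by simp
qed

lemma path_poly_two_edges_0: "path_poly [a, b] 0 = (fa_mul (fa_gen a) (fa_gen b) :: ('e, 'k::field) fa)"
  by (simp add: fa_mul_sub_right fa_mul_one_right fa_mul_zero_right)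
    (rule ext, simp add: fa_sub_def fa_zero_def)

lemma path_poly_two_edges_1:
  "path_poly [a, b] 1 = (fa_sub fa_zero (fa_add (fa_gen a) (fa_gen b)) :: ('e, 'k::field) fa)"
  by (simp add: fa_mul_sub_right fa_mul_one_right fa_mul_zero_right)
    (rule ext, simp add: fa_sub_def fa_add_def fa_zero_def)

lemma two_edge_paths_relations:
  assumes "src e1 = src e2" "tgt e1 = src f1" "tgt e2 = src f2" "tgt f1 = tgt f2"
  shows "A_eq src tgt (fa_mul (fa_gen e1) (fa_gen f1) :: ('e, 'k::field) fa) (fa_mul (fa_gen e2) (fa_gen f2))"
    and "A_eq src tgt (fa_add (fa_gen e1) (fa_gen f1) :: ('e, 'k::field) fa) (fa_add (fa_gen e2) (fa_gen f2))"
proof -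
  have rel: "fa_sub (path_poly [e1, f1] n) (path_poly [e2, f2] n)
      \<in> fa_ideal (graph_rels src tgt :: ('e, 'k) fa set)" for n
  proof (rule fa_ideal.gen)
    have "is_path src tgt [e1, f1]" "is_path src tgt [e2, f2]"
      using assms by (auto simp: is_path_def nth_Cons split: nat.splits)
    moreover have "path_origin src [e1, f1] = path_origin src [e2, f2]"
      "path_terminus tgt [e1, f1] = path_terminus tgt [e2, f2]"
      using assms by (auto simp: path_origin_def path_terminus_def)
    ultimately show "fa_sub (path_poly [e1, f1] n) (path_poly [e2, f2] n) \<in> graph_rels src tgt"
      unfolding graph_rels_def by blast
  qed
  show "A_eq src tgt (fa_mul (fa_gen e1) (fa_gen f1) :: ('e, 'k) fa) (fa_mul (fa_gen e2) (fa_gen f2))"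
    using rel[of 0] unfolding path_poly_two_edges_0 A_eq_def .
  have "fa_smult (-1) (fa_sub (path_poly [e1, f1] 1) (path_poly [e2, f2] 1))
      \<in> fa_ideal (graph_rels src tgt :: ('e, 'k) fa set)"
    using rel by (rule fa_ideal.smult)
  moreover have "fa_smult (-1) (fa_sub (path_poly [e1, f1] 1) (path_poly [e2, f2] 1))
      = fa_sub (fa_add (fa_gen e1) (fa_gen f1)) (fa_add (fa_gen e2) (fa_gen f2) :: ('e, 'k) fa)"
    unfolding path_poly_two_edges_1
    by (rule ext) (simp add: fa_smult_def fa_sub_def fa_add_def fa_zero_def)
  ultimately show "A_eq src tgt (fa_add (fa_gen e1) (fa_gen f1) :: ('e, 'k) fa) (fa_add (fa_gen e2) (fa_gen f2))"
    by (simp add: A_eq_def)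
qed

lemma d_op_two_edge_paths:
  assumes "src e1 = src e2" "tgt e1 = src f1" "tgt e2 = src f2" "tgt f1 = tgt f2"
  shows "d_op src tgt (fa_gen e1 :: ('e, 'k::field) fa) (fa_gen e2) (fa_gen f2)"
  using d_relation_mem_fa_ideal[OF fa_fin_gen two_edge_paths_relations[OF assms, unfolded A_eq_def]]
  by (simp add: d_op_def A_eq_def)

lemma u_op_two_edge_paths:
  assumes "src g1 = src g2" "tgt g1 = src h1" "tgt g2 = src h2" "tgt h1 = tgt h2"
  shows "u_op src tgt (fa_gen h1 :: ('e, 'k::field) fa) (fa_gen h2) (fa_gen g2)"
  using u_relation_mem_fa_ideal[OF fa_fin_gen two_edge_paths_relations[OF assms, unfolded A_eq_def]]
  by (simp add: u_op_def A_eq_def)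

theorem corollary3p3p2:
  fixes src tgt :: "'e \<Rightarrow> 'v"
  shows
   "(\<forall>e1 e2 f1 f2. e1 \<noteq> e2 \<and> src e1 = src e2 \<and> tgt f1 = tgt f2 \<and>
        tgt e1 = src f1 \<and> tgt e2 = src f2 \<longrightarrow>
      (\<forall>f \<in> {f1, f2}.
         d_op src tgt (fa_gen e1 :: ('e, 'k::field) fa) (fa_gen e2) (fa_gen f) \<or>
         d_op src tgt (fa_gen e2 :: ('e, 'k) fa) (fa_gen e1) (fa_gen f)))
    \<and>
    (\<forall>h1 h2 g1 g2. h1 \<noteq> h2 \<and> tgt h1 = tgt h2 \<and> src g1 = src g2 \<and>
        tgt g1 = src h1 \<and> tgt g2 = src h2 \<longrightarrow>
      (\<forall>g \<in> {g1, g2}.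
         u_op src tgt (fa_gen h1 :: ('e, 'k) fa) (fa_gen h2) (fa_gen g) \<or>
         u_op src tgt (fa_gen h2 :: ('e, 'k) fa) (fa_gen h1) (fa_gen g)))"
proof (intro conjI allI impI ballI)
  fix e1 e2 f1 f2 f
  assume "e1 \<noteq> e2 \<and> src e1 = src e2 \<and> tgt f1 = tgt f2 \<and> tgt e1 = src f1 \<and> tgt e2 = src f2"
    and "f \<in> {f1, f2}"
  then show "d_op src tgt (fa_gen e1 :: ('e, 'k::field) fa) (fa_gen e2) (fa_gen f) \<or>
      d_op src tgt (fa_gen e2 :: ('e, 'k) fa) (fa_gen e1) (fa_gen f)"
    using d_op_two_edge_paths[of src e1 e2 tgt f1 f2] d_op_two_edge_paths[of src e2 e1 tgt f2 f1]
    by auto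
next
  fix h1 h2 g1 g2 g
  assume "h1 \<noteq> h2 \<and> tgt h1 = tgt h2 \<and> src g1 = src g2 \<and> tgt g1 = src h1 \<and> tgt g2 = src h2"
    and "g \<in> {g1, g2}"
  then show "u_op src tgt (fa_gen h1 :: ('e, 'k::field) fa) (fa_gen h2) (fa_gen g) \<or>
      u_op src tgt (fa_gen h2 :: ('e, 'k) fa) (fa_gen h1) (fa_gen g)"
    using u_op_two_edge_paths[of src g1 g2 tgt h1 h2] u_op_two_edge_paths[of src g2 g1 tgt h2 h1]
    by auto
qed

end
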